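(* Let $M^4$ be a smooth $4$-manifold, $\sigma$ a smooth non-constant function on $M^4$ with $\sigma_i:=\partial\sigma/\partial x^i$, $\sigma_{ij}:=\partial^2\sigma/\partial x^i\partial x^j$, and $h_{11}(t)>0$ a Riemannian metric on $\mathbb{R}$, $h^{11}=1/h_{11}$. On the domain of $J^{1*}(\mathbb{R},M^4)$ where $\mathcal{P}^{1111}:=p^1_1p^1_2p^1_3p^1_4>0$, consider $\overset{*}{H}=4e^{-2\sigma(x)}h_{11}(t)[\mathcal{P}^{1111}]^{1/2}$. Then the scalar curvature of its Cartan canonical connection is $$\mathrm{Sc}(C\Gamma(N))=-4e^{-2\sigma}\left[\mathcal{P}^{1111}\right]^{1/2}\Sigma_{11}-\frac32h^{11}e^{2\sigma}\left[\mathcal{P}^{1111}\right]^{-1/2},$$ where $\Sigma_{11}=\sum_{1\le a<b\le 4}\dfrac{\sigma_{ab}}{p^1_ap^1_b}$.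
   Context: $\overset{*}{g}{}^{ij}=\frac{h^{11}}{2}\frac{\partial^2\overset{*}{H}}{\partial p^1_i\partial p^1_j}$ and $(\overset{*}{g}_{ij})$ is its inverse. The scalar curvature is $\mathrm{Sc}(C\Gamma(N))=\overset{*}{g}{}^{ij}R_{ij}-h^{11}\overset{*}{g}_{ij}S^{(i)(j)}_{(1)(1)}$ (summation), where, with $H^i_{jk}=4\delta^i_j\delta^i_k\sigma_i$, $C^{j(k)}_{i(1)}=\mathsf{C}^{jk}_i\frac{p^1_i}{p^1_jp^1_k}$ (no sums), $\mathsf{C}^{jk}_i=\frac{1-2\delta^{jk}-2\delta^j_i-2\delta^k_i+8\delta^j_i\delta^k_i}{8}$, $\underset{2}{N}{}^{(1)}_{(i)j}=-4\sigma_ip^1_i\delta_{ij}$, $\frac{\delta}{\delta x^i}=\frac{\partial}{\partial x^i}+4\sigma_ip^1_i\frac{\partial}{\partial p^1_i}$ and $R^{(1)}_{(r)ij}=\frac{\delta \underset{2}{N}{}^{(1)}_{(r)i}}{\delta x^j}-\frac{\delta \underset{2}{N}{}^{(1)}_{(r)j}}{\delta x^i}$, one sets $R_{ij}=\frac{\delta H^m_{ij}}{\delta x^m}-\frac{\delta H^m_{im}}{\delta x^j}+H^r_{ij}H^m_{rm}-H^r_{im}H^m_{rj}+C^{m(r)}_{i(1)}R^{(1)}_{(r)jm}$ and $S^{(i)(j)}_{(1)(1)}=\frac{\partial C^{i(j)}_{m(1)}}{\partial p^1_m}-\frac{\partial C^{i(m)}_{m(1)}}{\partial p^1_j}+C^{r(j)}_{m(1)}C^{i(m)}_{r(1)}-C^{r(m)}_{m(1)}C^{i(j)}_{r(1)}$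 (sums over $m,r$). *)

theory Defs
  imports "HOL-Analysis.Analysis"
begin

text \<open>Local coordinates: a point of the chart domain of M^4 is x :: real^4, the fibre
coordinates of J^{1*}(R,M^4) are p = (p^1_1,...,p^1_4) :: real^4, t :: real.
Indices range over the numeral type 4.\<close>

type_synonym fn4 = "real^4 \<Rightarrow> real^4 \<Rightarrow> real"

definition pd :: "4 \<Rightarrow> (real^4 \<Rightarrow> real) \<Rightarrow> real^4 \<Rightarrow> real" where
  "pd i f x = deriv (\<lambda>s. f (x + s *\<^sub>R axis i 1)) 0"

definition smooth_on :: "(real^4) set \<Rightarrow> (real^4 \<Rightarrow> real) \<Rightarrow> bool" where
  "smooth_on U f \<longleftrightarrow> (\<forall>is :: 4 list. (fold pd is f) differentiable_on U)"

definition dX :: "4 \<Rightarrow> fn4 \<Rightarrow> fn4" where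
  "dX i F x p = deriv (\<lambda>s. F (x + s *\<^sub>R axis i 1) p) 0"
definition dP :: "4 \<Rightarrow> fn4 \<Rightarrow> fn4" where
  "dP i F x p = deriv (\<lambda>s. F x (p + s *\<^sub>R axis i 1)) 0"

definition kd :: "4 \<Rightarrow> 4 \<Rightarrow> real" where
  "kd i j = (if i = j then 1 else 0)"

definition sig1 :: "(real^4 \<Rightarrow> real) \<Rightarrow> 4 \<Rightarrow> real^4 \<Rightarrow> real" where
  "sig1 \<sigma> i = pd i \<sigma>"
definition sig2 :: "(real^4 \<Rightarrow> real) \<Rightarrow> 4 \<Rightarrow> 4 \<Rightarrow> real^4 \<Rightarrow> real" where
  "sig2 \<sigma> i j = pd j (pd i \<sigma>)"

definition deltaX :: "(real^4 \<Rightarrow> real) \<Rightarrow> 4 \<Rightarrow> fn4 \<Rightarrow> fn4" where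
  "deltaX \<sigma> i F x p = dX i F x p + 4 * sig1 \<sigma> i x * p$i * dP i F x p"

definition Pprod :: "real^4 \<Rightarrow> real" where
  "Pprod p = p$1 * p$2 * p$3 * p$4"

definition Hstar :: "(real^4 \<Rightarrow> real) \<Rightarrow> (real \<Rightarrow> real) \<Rightarrow> real \<Rightarrow> fn4" where
  "Hstar \<sigma> h11 t x p = 4 * exp (-2 * \<sigma> x) * h11 t * sqrt (Pprod p)"

definition gUp :: "(real^4 \<Rightarrow> real) \<Rightarrow> (real \<Rightarrow> real) \<Rightarrow> real \<Rightarrow> real^4 \<Rightarrow> real^4 \<Rightarrow> real^4^4" where
  "gUp \<sigma> h11 t x p = (\<chi> i j. (1 / h11 t) / 2 * dP i (dP j (Hstar \<sigma> h11 t)) x p)"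

definition gDown :: "(real^4 \<Rightarrow> real) \<Rightarrow> (real \<Rightarrow> real) \<Rightarrow> real \<Rightarrow> real^4 \<Rightarrow> real^4 \<Rightarrow> real^4^4" where
  "gDown \<sigma> h11 t x p = matrix_inv (gUp \<sigma> h11 t x p)"

definition Hc :: "(real^4 \<Rightarrow> real) \<Rightarrow> 4 \<Rightarrow> 4 \<Rightarrow> 4 \<Rightarrow> fn4" where
  "Hc \<sigma> i j k x p = 4 * kd i j * kd i k * sig1 \<sigma> i x"

definition Cconst :: "4 \<Rightarrow> 4 \<Rightarrow> 4 \<Rightarrow> real" where
  "Cconst i j k = (1 - 2 * kd j k - 2 * kd j i - 2 * kd k i + 8 * kd j i * kd k i) / 8"

text \<open>C^{j(k)}_{i(1)} = Cconst^{jk}_i p_i/(p_j p_k); written Cc i j k\<close>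
definition Cc :: "4 \<Rightarrow> 4 \<Rightarrow> 4 \<Rightarrow> fn4" where
  "Cc i j k x p = Cconst i j k * p$i / (p$j * p$k)"

definition Nc :: "(real^4 \<Rightarrow> real) \<Rightarrow> 4 \<Rightarrow> 4 \<Rightarrow> fn4" where
  "Nc \<sigma> i j x p = -4 * sig1 \<sigma> i x * p$i * kd i j"

definition R1 :: "(real^4 \<Rightarrow> real) \<Rightarrow> 4 \<Rightarrow> 4 \<Rightarrow> 4 \<Rightarrow> fn4" where
  "R1 \<sigma> r i j x p = deltaX \<sigma> j (Nc \<sigma> r i) x p - deltaX \<sigma> i (Nc \<sigma> r j) x p"

definition Ric :: "(real^4 \<Rightarrow> real) \<Rightarrow> 4 \<Rightarrow> 4 \<Rightarrow> fn4" where
  "Ric \<sigma> i j x p =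
     (\<Sum>m\<in>UNIV. deltaX \<sigma> m (Hc \<sigma> m i j) x p)
   - (\<Sum>m\<in>UNIV. deltaX \<sigma> j (Hc \<sigma> m i m) x p)
   + (\<Sum>r\<in>UNIV. \<Sum>m\<in>UNIV. Hc \<sigma> r i j x p * Hc \<sigma> m r m x p)
   - (\<Sum>r\<in>UNIV. \<Sum>m\<in>UNIV. Hc \<sigma> r i m x p * Hc \<sigma> m r j x p)
   + (\<Sum>r\<in>UNIV. \<Sum>m\<in>UNIV. Cc i m r x p * R1 \<sigma> r j m x p)"

definition Sv :: "4 \<Rightarrow> 4 \<Rightarrow> fn4" where
  "Sv i j x p =
     (\<Sum>m\<in>UNIV. dP m (Cc m i j) x p)
   - (\<Sum>m\<in>UNIV. dP j (Cc m i m) x p)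
   + (\<Sum>r\<in>UNIV. \<Sum>m\<in>UNIV. Cc m r j x p * Cc r i m x p)
   - (\<Sum>r\<in>UNIV. \<Sum>m\<in>UNIV. Cc m r m x p * Cc r i j x p)"

definition ScCG :: "(real^4 \<Rightarrow> real) \<Rightarrow> (real \<Rightarrow> real) \<Rightarrow> real \<Rightarrow> real^4 \<Rightarrow> real^4 \<Rightarrow> real" where
  "ScCG \<sigma> h11 t x p =
     (\<Sum>i\<in>UNIV. \<Sum>j\<in>UNIV. gUp \<sigma> h11 t x p $ i $ j * Ric \<sigma> i j x p)
   - (1 / h11 t) * (\<Sum>i\<in>UNIV. \<Sum>j\<in>UNIV. gDown \<sigma> h11 t x p $ i $ j * Sv i j x p)"

definition Sigma11 :: "(real^4 \<Rightarrow> real) \<Rightarrow> real^4 \<Rightarrow> real^4 \<Rightarrow> real" where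
  "Sigma11 \<sigma> x p = (\<Sum>(a,b)\<in>{(a::4,b). a < b}. sig2 \<sigma> a b x / (p$a * p$b))"

end

theory Submission
  imports Defs
begin

text \<open>Since \<surd>P is a product of square roots of the p_i, the fibre Hessian of H* gives
  g*^{ij} = e^{-2\<sigma>} \<surd>P (1 - 2\<delta>_ij) / (2 p_i p_j). In dimension 4 the matrix J - 2I
  (J all ones) squares to 4I, which makes the inverse explicit as well:
  g*_ij = p_i p_j (1 - 2\<delta>_ij) e^{2\<sigma>} / (2 \<surd>P). In g*^{ij} R_ij only the
  mixed derivatives \<sigma>_ab with a \<noteq> b survive, and Schwarz's theorem \<sigma>_ab = \<sigma>_ba folds
  their double sum into 2\<Sigma>_11; g*_ij S^{(i)(j)} is simply 3 e^{2\<sigma>} / (2 \<surd>P).\<close>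

section \<open>Directional derivatives\<close>

lemma has_real_derivative_along_line:
  fixes g :: "'a::real_normed_vector \<Rightarrow> real"
  assumes "(g has_derivative g') (at (y + a *\<^sub>R e))"
  shows "((\<lambda>s. g (y + s *\<^sub>R e)) has_real_derivative g' e) (at a)"
proof -
  have line: "((\<lambda>s::real. y + s *\<^sub>R e) has_derivative (\<lambda>h. h *\<^sub>R e)) (at a)"
    by (auto intro!: derivative_eq_intros)
  have "((g \<circ> (\<lambda>s. y + s *\<^sub>R e)) has_derivative (g' \<circ> (\<lambda>h. h *\<^sub>R e))) (at a)"
    by (rule diff_chain_at[OF line]) (use assms in simp)
  moreover have "g' \<circ> (\<lambda>h. h *\<^sub>R e) = (\<lambda>h. g' e * h)"
    using has_derivative_linear[OF assms] by (auto simp: linear_scale o_def mult.commute)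
  ultimately show ?thesis
    by (simp add: has_field_derivative_def o_def)
qed

lemma pd_has_real_derivative_along_axis:
  assumes "g differentiable (at (y + a *\<^sub>R axis i 1))"
  shows "((\<lambda>s. g (y + s *\<^sub>R axis i 1)) has_real_derivative pd i g (y + a *\<^sub>R axis i 1)) (at a)"
proof -
  obtain g' where g': "(g has_derivative g') (at (y + a *\<^sub>R axis i 1))"
    using assms unfolding differentiable_def by blast
  have "((\<lambda>s. g (y + a *\<^sub>R axis i 1 + s *\<^sub>R axis i 1)) has_real_derivative g' (axis i 1)) (at 0)"
    by (rule has_real_derivative_along_line) (use g' in simp)
  then have "pd i g (y + a *\<^sub>R axis i 1) = g' (axis i 1)"
    unfolding pd_def by (rule DERIV_imp_deriv)
  with has_real_derivative_along_line[OF g'] show ?thesis by simp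
qed

lemma component_along_axis_has_real_derivative:
  "((\<lambda>s. (p + s *\<^sub>R axis m 1) $ r) has_real_derivative kd m r) (at a)"
proof -
  have "(\<lambda>s. (p + s *\<^sub>R axis m (1::real)) $ r) = (\<lambda>s. p$r + s * kd m r)"
    by (auto simp: axis_def kd_def)
  then show ?thesis by (auto intro!: derivative_eq_intros)
qed

section \<open>Symmetry of second partial derivatives\<close>

lemma axis_steps_in_ball:
  assumes "0 \<le> a" "a \<le> t" "0 \<le> b" "b \<le> t" "2*t < r"
  shows "x + a *\<^sub>R axis i (1::real) + b *\<^sub>R axis j 1 \<in> ball x r"
proof -
  have "norm (a *\<^sub>R axis i (1::real) + b *\<^sub>R axis j 1)
      \<le> norm (a *\<^sub>R axis i (1::real)) + norm (b *\<^sub>R axis j (1::real))"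
    by (rule norm_triangle_ineq)
  also have "\<dots> = a + b" using assms by simp
  finally have "norm (a *\<^sub>R axis i (1::real) + b *\<^sub>R axis j 1) < r" using assms by simp
  moreover have "dist x (x + w) = norm w" for w
    by (metis add.right_neutral dist_add_cancel dist_0_norm)
  ultimately show ?thesis by (simp add: add.assoc)
qed

lemma second_difference_mean_value:
  fixes f :: "real^4 \<Rightarrow> real"
  assumes r: "ball x r \<subseteq> U" and t: "0 < t" "2*t < r"
    and d: "\<forall>y\<in>U. f differentiable (at y) \<and> pd i f differentiable (at y)"
  shows "\<exists>a b. 0<a \<and> a<t \<and> 0<b \<and> b<t \<and>
    f (x + t *\<^sub>R axis i 1 + t *\<^sub>R axis j 1) - f (x + t *\<^sub>R axis i 1) - f (x + t *\<^sub>R axis j 1) + f x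
     = t*t*pd j (pd i f) (x + a *\<^sub>R axis i 1 + b *\<^sub>R axis j 1)"
proof -
  define u :: "real^4" where "u = axis i 1"
  define v :: "real^4" where "v = axis j 1"
  have inU: "x + a *\<^sub>R u + b *\<^sub>R v \<in> U" if "0 \<le> a" "a \<le> t" "0 \<le> b" "b \<le> t" for a b
    using axis_steps_in_ball[OF that t(2)] r unfolding u_def v_def by blast
  define \<phi> where "\<phi> a = f (x + t *\<^sub>R v + a *\<^sub>R u) - f (x + a *\<^sub>R u)" for a
  have D\<phi>: "DERIV \<phi> a :> pd i f (x + t *\<^sub>R v + a *\<^sub>R u) - pd i f (x + a *\<^sub>R u)"
    if "0 \<le> a" "a \<le> t" for a
  proof -
    have "x + t *\<^sub>R v + a *\<^sub>R u \<in> U" "x + a *\<^sub>R u \<in> U"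
      using inU[of a t] inU[of a 0] that t by (simp_all add: algebra_simps)
    then show ?thesis
      unfolding \<phi>_def u_def using d by (intro DERIV_diff pd_has_real_derivative_along_axis) auto
  qed
  obtain \<alpha> where \<alpha>: "0 < \<alpha>" "\<alpha> < t"
    "\<phi> t - \<phi> 0 = (t - 0) * (pd i f (x + t *\<^sub>R v + \<alpha> *\<^sub>R u) - pd i f (x + \<alpha> *\<^sub>R u))"
    using MVT2[OF t(1), of \<phi>, OF D\<phi>] by auto
  define \<psi> where "\<psi> b = pd i f (x + \<alpha> *\<^sub>R u + b *\<^sub>R v)" for b
  have D\<psi>: "DERIV \<psi> b :> pd j (pd i f) (x + \<alpha> *\<^sub>R u + b *\<^sub>R v)" if "0 \<le> b" "b \<le> t" for b
    unfolding \<psi>_def v_def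
    using inU[of \<alpha> b] that \<alpha> d by (intro pd_has_real_derivative_along_axis) (auto simp: v_def)
  obtain \<beta> where \<beta>: "0 < \<beta>" "\<beta> < t"
    "\<psi> t - \<psi> 0 = (t - 0) * pd j (pd i f) (x + \<alpha> *\<^sub>R u + \<beta> *\<^sub>R v)"
    using MVT2[OF t(1), of \<psi>, OF D\<psi>] by auto
  have "f (x + t *\<^sub>R u + t *\<^sub>R v) - f (x + t *\<^sub>R u) - f (x + t *\<^sub>R v) + f x = \<phi> t - \<phi> 0"
    unfolding \<phi>_def by (simp add: algebra_simps)
  also have "\<dots> = t * (\<psi> t - \<psi> 0)" using \<alpha>(3) unfolding \<psi>_def by (simp add: algebra_simps)
  also have "\<dots> = t*t*pd j (pd i f) (x + \<alpha> *\<^sub>R u + \<beta> *\<^sub>R v)" using \<beta>(3) by simp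
  finally show ?thesis using \<alpha> \<beta> unfolding u_def v_def by blast
qed

lemma isCont_eq_if_coincide_nearby:
  fixes F G :: "'a::metric_space \<Rightarrow> 'b::metric_space"
  assumes "isCont F x" "isCont G x"
    and near: "\<And>d. d > 0 \<Longrightarrow> \<exists>y z. dist y x < d \<and> dist z x < d \<and> F y = G z"
  shows "F x = G x"
proof (rule ccontr)
  assume "F x \<noteq> G x"
  define e where "e = dist (F x) (G x) / 2"
  have "e > 0" using \<open>F x \<noteq> G x\<close> by (simp add: e_def)
  obtain d1 where d1: "d1 > 0" "\<forall>y. dist y x < d1 \<longrightarrow> dist (F y) (F x) < e"
    using assms(1) \<open>e > 0\<close> unfolding continuous_at_eps_delta by blast
  obtain d2 where d2: "d2 > 0" "\<forall>z. dist z x < d2 \<longrightarrow> dist (G z) (G x) < e"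
    using assms(2) \<open>e > 0\<close> unfolding continuous_at_eps_delta by blast
  obtain y z where "dist y x < min d1 d2" "dist z x < min d1 d2" "F y = G z"
    using near[of "min d1 d2"] d1 d2 by auto
  then have "dist (F x) (F y) < e" "dist (G z) (G x) < e"
    using d1 d2 by (auto simp: dist_commute)
  then have "dist (F x) (G x) < 2 * e"
    using dist_triangle[of "F x" "G x" "F y"] \<open>F y = G z\<close> by (simp add: dist_commute)
  then show False by (simp add: e_def)
qed

theorem pd_commute:
  fixes f :: "real^4 \<Rightarrow> real"
  assumes U: "open U" "x \<in> U"
    and d: "\<forall>y\<in>U. f differentiable (at y) \<and> pd i f differentiable (at y) \<and> pd j f differentiable (at y)"
    and c: "isCont (pd j (pd i f)) x" "isCont (pd i (pd j f)) x"
  shows "pd j (pd i f) x = pd i (pd j f) x"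
proof (rule isCont_eq_if_coincide_nearby[OF c])
  fix d :: real assume "d > 0"
  obtain r where r: "r > 0" "ball x r \<subseteq> U" using U open_contains_ball by blast
  define t where "t = min r d / 4"
  have t: "0 < t" "2*t < r" "2*t < d" using r \<open>d > 0\<close> by (auto simp: t_def)
  obtain a b where ab: "0<a" "a<t" "0<b" "b<t"
    "f (x + t *\<^sub>R axis i 1 + t *\<^sub>R axis j 1) - f (x + t *\<^sub>R axis i 1) - f (x + t *\<^sub>R axis j 1) + f x
     = t*t*pd j (pd i f) (x + a *\<^sub>R axis i 1 + b *\<^sub>R axis j 1)"
    using second_difference_mean_value[OF r(2) t(1,2), of f i j] d by blast
  obtain a' b' where ab': "0<a'" "a'<t" "0<b'" "b'<t"
    "f (x + t *\<^sub>R axis j 1 + t *\<^sub>R axis i 1) - f (x + t *\<^sub>R axis j 1) - f (x + t *\<^sub>R axis i 1) + f x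
     = t*t*pd i (pd j f) (x + a' *\<^sub>R axis j 1 + b' *\<^sub>R axis i 1)"
    using second_difference_mean_value[OF r(2) t(1,2), of f j i] d by blast
  have "t*t*pd j (pd i f) (x + a *\<^sub>R axis i 1 + b *\<^sub>R axis j 1)
      = t*t*pd i (pd j f) (x + a' *\<^sub>R axis j 1 + b' *\<^sub>R axis i 1)"
    using ab(5) ab'(5) by (simp add: algebra_simps)
  then have "pd j (pd i f) (x + a *\<^sub>R axis i 1 + b *\<^sub>R axis j 1)
      = pd i (pd j f) (x + a' *\<^sub>R axis j 1 + b' *\<^sub>R axis i 1)"
    using t(1) by simp
  moreover have "x + a *\<^sub>R axis i 1 + b *\<^sub>R axis j 1 \<in> ball x d"
    "x + a' *\<^sub>R axis j 1 + b' *\<^sub>R axis i 1 \<in> ball x d"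
    using axis_steps_in_ball[of _ t _ d x] ab ab' t by simp_all
  ultimately show "\<exists>y z. dist y x < d \<and> dist z x < d \<and> pd j (pd i f) y = pd i (pd j f) z"
    by (metis dist_commute mem_ball)
qed

lemma smooth_on_differentiable:
  assumes "open U" "smooth_on U f" "y \<in> U"
  shows "f differentiable (at y)" "pd a f differentiable (at y)"
    "pd b (pd a f) differentiable (at y)"
proof -
  have "\<And>is. fold pd is f differentiable (at y)"
    using assms differentiable_on_eq_differentiable_at unfolding smooth_on_def by blast
  from this[of "[]"] this[of "[a]"] this[of "[a, b]"] show
    "f differentiable (at y)" "pd a f differentiable (at y)" "pd b (pd a f) differentiable (at y)"
    by simp_all
qed

lemma smooth_on_sig2_commute:
  assumes "open U" "smooth_on U \<sigma>" "x \<in> U"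
  shows "sig2 \<sigma> a b x = sig2 \<sigma> b a x"
  unfolding sig2_def
  using assms smooth_on_differentiable[OF assms(1,2)]
  by (intro pd_commute[of U] differentiable_imp_continuous_within) auto

section \<open>The metric of the Hamiltonian\<close>

lemma Pprod_component_nonzero: "Pprod q \<noteq> 0 \<Longrightarrow> q$j \<noteq> 0"
  using exhaust_4[of j] by (elim disjE) (auto simp: Pprod_def)

definition Pprod_omit :: "4 \<Rightarrow> real^4 \<Rightarrow> real" where
  "Pprod_omit j q = Pprod (q + (1 - q$j) *\<^sub>R axis j 1)"

lemma Pprod_along_axis: "Pprod (q + s *\<^sub>R axis j 1) = (q$j + s) * Pprod_omit j q"
  unfolding Pprod_omit_def using exhaust_4[of j]
  by (elim disjE) (simp_all add: Pprod_def axis_def algebra_simps)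

lemma Pprod_omit_eq: "q$j \<noteq> 0 \<Longrightarrow> Pprod_omit j q = Pprod q / q$j"
  using Pprod_along_axis[of q 0 j] by simp

lemma sqrt_Pprod_has_real_derivative_along_axis:
  assumes "Pprod q > 0"
  shows "DERIV (\<lambda>s. sqrt (Pprod (q + s *\<^sub>R axis j 1))) 0
    :> inverse (sqrt (Pprod q)) / 2 * Pprod_omit j q"
proof -
  have "DERIV (\<lambda>s. Pprod (q + s *\<^sub>R axis j 1)) 0 :> Pprod_omit j q"
    unfolding Pprod_along_axis by (auto intro!: derivative_eq_intros)
  moreover have "DERIV sqrt (Pprod (q + 0 *\<^sub>R axis j 1)) :> inverse (sqrt (Pprod q)) / 2"
    using DERIV_real_sqrt[OF assms] by simp
  ultimately show ?thesis by (rule DERIV_chain2[rotated])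
qed

lemma dP_Hstar:
  assumes "Pprod q > 0"
  shows "dP j (Hstar \<sigma> h11 t) x q = (4 * exp (-2 * \<sigma> x) * h11 t) * sqrt (Pprod q) / (2 * q$j)"
proof -
  define C where "C = 4 * exp (-2 * \<sigma> x) * h11 t"
  have qj: "q$j \<noteq> 0" using Pprod_component_nonzero assms by force
  have "dP j (Hstar \<sigma> h11 t) x q = C * (inverse (sqrt (Pprod q)) / 2 * Pprod_omit j q)"
    unfolding dP_def Hstar_def C_def[symmetric]
    by (intro DERIV_imp_deriv DERIV_cmult sqrt_Pprod_has_real_derivative_along_axis assms)
  also have "\<dots> = C * sqrt (Pprod q) / (2 * q$j)"
  proof -
    have P: "Pprod q = sqrt (Pprod q) * sqrt (Pprod q)" and "sqrt (Pprod q) > 0"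
      using assms by simp_all
    then show ?thesis unfolding Pprod_omit_eq[OF qj] by (subst P) (use qj in \<open>simp add: field_simps\<close>)
  qed
  finally show ?thesis by (simp add: C_def)
qed

lemma dP_dP_Hstar:
  assumes P: "Pprod p > 0"
  shows "dP i (dP j (Hstar \<sigma> h11 t)) x p
     = (4 * exp (-2 * \<sigma> x) * h11 t) * sqrt (Pprod p) * (1 - 2 * kd i j) / (4 * (p$i * p$j))"
proof -
  define C where "C = 4 * exp (-2 * \<sigma> x) * h11 t"
  define G where "G s = C * sqrt (Pprod (p + s *\<^sub>R axis i 1)) / (2 * (p + s *\<^sub>R axis i 1)$j)" for s
  define G' where "G' = ((C * (inverse (sqrt (Pprod p)) / 2 * Pprod_omit i p)) * (2 * p$j)
      - C * sqrt (Pprod p) * (2 * kd i j)) / ((2 * p$j) * (2 * p$j))"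
  have pi: "p$i \<noteq> 0" and pj: "p$j \<noteq> 0" using Pprod_component_nonzero P by force+
  have "open {s::real. 0 < Pprod (p + s *\<^sub>R axis i 1)}"
    unfolding Pprod_along_axis by (intro open_Collect_less continuous_intros)
  then have "eventually (\<lambda>s. 0 < Pprod (p + s *\<^sub>R axis i 1)) (nhds 0)"
    using eventually_nhds_in_open[of _ 0] P by fastforce
  then have near: "eventually (\<lambda>s. dP j (Hstar \<sigma> h11 t) x (p + s *\<^sub>R axis i 1) = G s) (nhds 0)"
    by (rule eventually_mono) (simp add: dP_Hstar G_def C_def)
  have "DERIV G 0 :> G'"
    unfolding G_def G'_def
    using DERIV_divide[OF DERIV_cmult[OF sqrt_Pprod_has_real_derivative_along_axis[OF P, of i], of C]
        DERIV_cmult[OF component_along_axis_has_real_derivative[of p i j 0], of 2]] pj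
    by simp
  then have "DERIV (\<lambda>s. dP j (Hstar \<sigma> h11 t) x (p + s *\<^sub>R axis i 1)) 0 :> G'"
    using DERIV_cong_ev[OF refl near refl] by blast
  then have "dP i (dP j (Hstar \<sigma> h11 t)) x p = G'"
    unfolding dP_def[of i] by (rule DERIV_imp_deriv)
  also have "\<dots> = C * sqrt (Pprod p) * (1 - 2 * kd i j) / (4 * (p$i * p$j))"
  proof -
    have P': "Pprod p = sqrt (Pprod p) * sqrt (Pprod p)" and "sqrt (Pprod p) > 0"
      using P by simp_all
    then show ?thesis unfolding G'_def Pprod_omit_eq[OF pi] kd_def
      by (subst P') (use pi pj in \<open>auto simp add: field_simps\<close>)
  qed
  finally show ?thesis by (simp add: C_def)
qed

lemma gUp_eq:
  assumes "h11 t > 0" "Pprod p > 0"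
  shows "gUp \<sigma> h11 t x p $ i $ j
    = exp (-2 * \<sigma> x) * sqrt (Pprod p) * (1 - 2 * kd i j) / (2 * (p$i * p$j))"
proof -
  have "p$i \<noteq> 0" "p$j \<noteq> 0" using Pprod_component_nonzero assms(2) by force+
  then show ?thesis using assms by (simp add: gUp_def dP_dP_Hstar field_simps)
qed

lemma matrix_inv_eq:
  fixes A B :: "'a::semiring_1^'n^'n"
  assumes "A ** B = mat 1" "B ** A = mat 1"
  shows "matrix_inv A = B"
  unfolding matrix_inv_def
proof (rule some_equality)
  show "A ** B = mat 1 \<and> B ** A = mat 1" using assms by blast
next
  fix B' assume B': "A ** B' = mat 1 \<and> B' ** A = mat 1"
  have "B' = B' ** (A ** B)" using assms by (simp add: matrix_mul_rid)
  also have "\<dots> = (B' ** A) ** B" by (simp add: matrix_mul_assoc)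
  also have "\<dots> = B" using B' by (simp add: matrix_mul_lid)
  finally show "B' = B" .
qed

lemma gDown_eq:
  assumes "h11 t > 0" "Pprod p > 0"
  shows "gDown \<sigma> h11 t x p $ i $ j
    = p$i * p$j * (1 - 2 * kd i j) / (2 * exp (-2 * \<sigma> x) * sqrt (Pprod p))"
proof -
  define e where "e = exp (-2 * \<sigma> x)"
  define sq where "sq = sqrt (Pprod p)"
  have e: "e > 0" and sq: "sq > 0" using assms by (auto simp: e_def sq_def)
  have nz: "p$1 \<noteq> 0" "p$2 \<noteq> 0" "p$3 \<noteq> 0" "p$4 \<noteq> 0"
    using Pprod_component_nonzero assms(2) by force+
  define A :: "real^4^4" where "A = (\<chi> i j. e * sq * (1 - 2 * kd i j) / (2 * (p$i * p$j)))"
  define B :: "real^4^4" where "B = (\<chi> i j. p$i * p$j * (1 - 2 * kd i j) / (2 * e * sq))"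
  have "gUp \<sigma> h11 t x p = A"
    unfolding A_def vec_eq_iff using gUp_eq[of h11 t p, OF assms] by (simp add: e_def sq_def)
  moreover have "A ** B = mat 1" "B ** A = mat 1"
    unfolding A_def B_def matrix_matrix_mult_def mat_def vec_eq_iff forall_4
    using e sq nz by (simp_all add: sum_4 kd_def field_simps)
  ultimately have "gDown \<sigma> h11 t x p = B" unfolding gDown_def by (simp add: matrix_inv_eq)
  then show ?thesis by (simp add: B_def e_def sq_def)
qed

section \<open>Curvature tensors\<close>

lemma sig1_has_real_derivative_along_axis:
  assumes "pd a \<sigma> differentiable (at x)"
  shows "((\<lambda>s. sig1 \<sigma> a (x + s *\<^sub>R axis m 1)) has_real_derivative sig2 \<sigma> a m x) (at 0)"
  using pd_has_real_derivative_along_axis[of "pd a \<sigma>" x 0 m] assms by (simp add: sig1_def sig2_def)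

lemma deltaX_Hc:
  assumes "pd a \<sigma> differentiable (at x)"
  shows "deltaX \<sigma> m (Hc \<sigma> a b c) x p = 4 * kd a b * kd a c * sig2 \<sigma> a m x"
proof -
  have "dX m (Hc \<sigma> a b c) x p = 4 * kd a b * kd a c * sig2 \<sigma> a m x"
    unfolding dX_def Hc_def
    by (intro DERIV_imp_deriv DERIV_cmult sig1_has_real_derivative_along_axis assms)
  moreover have "dP m (Hc \<sigma> a b c) x p = 0" by (simp add: dP_def Hc_def)
  ultimately show ?thesis by (simp add: deltaX_def)
qed

lemma deltaX_Nc:
  assumes "pd r \<sigma> differentiable (at x)"
  shows "deltaX \<sigma> m (Nc \<sigma> r j) x p = -4 * sig2 \<sigma> r m x * p$r * kd r j
      + 4 * sig1 \<sigma> m x * p$m * (-4 * sig1 \<sigma> r x * kd r j * kd m r)"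
proof -
  have "dX m (Nc \<sigma> r j) x p = -4 * sig2 \<sigma> r m x * p$r * kd r j"
    unfolding dX_def Nc_def
    by (rule DERIV_imp_deriv)
      (auto intro!: derivative_eq_intros sig1_has_real_derivative_along_axis[OF assms])
  moreover have "dP m (Nc \<sigma> r j) x p = -4 * sig1 \<sigma> r x * kd r j * kd m r"
    unfolding dP_def Nc_def
    by (rule DERIV_imp_deriv)
      (auto intro!: derivative_eq_intros simp: axis_def kd_def)
  ultimately show ?thesis by (simp add: deltaX_def)
qed

lemma R1_eq:
  assumes "pd r \<sigma> differentiable (at x)"
  shows "R1 \<sigma> r i j x p = -4 * p$r * (sig2 \<sigma> r j x * kd r i - sig2 \<sigma> r i x * kd r j)"
  unfolding R1_def deltaX_Nc[OF assms]
  by (cases "r = i"; cases "r = j"; simp add: kd_def algebra_simps)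

lemma Ric_eq:
  assumes "\<And>a. pd a \<sigma> differentiable (at x)"
  shows "Ric \<sigma> i j x p = 4 * kd i j * sig2 \<sigma> i i x - 4 * sig2 \<sigma> i j x
     + (\<Sum>r\<in>UNIV. \<Sum>m\<in>UNIV. Cconst i m r * p$i / (p$m * p$r) *
        (-4 * p$r * (sig2 \<sigma> r m x * kd r j - sig2 \<sigma> r j x * kd r m)))"
proof -
  have "(\<Sum>m\<in>UNIV. deltaX \<sigma> m (Hc \<sigma> m i j) x p) = 4 * kd i j * sig2 \<sigma> i i x"
    unfolding deltaX_Hc[OF assms]
    using exhaust_4[of i] exhaust_4[of j] by (elim disjE) (simp_all add: sum_4 kd_def)
  moreover have "(\<Sum>m\<in>UNIV. deltaX \<sigma> j (Hc \<sigma> m i m) x p) = 4 * sig2 \<sigma> i j x"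
    unfolding deltaX_Hc[OF assms]
    using exhaust_4[of i] by (elim disjE) (simp_all add: sum_4 kd_def)
  moreover have "(\<Sum>r\<in>UNIV. \<Sum>m\<in>UNIV. Hc \<sigma> r i j x p * Hc \<sigma> m r m x p)
      = (\<Sum>r\<in>UNIV. \<Sum>m\<in>UNIV. Hc \<sigma> r i m x p * Hc \<sigma> m r j x p)"
    unfolding Hc_def
    using exhaust_4[of i] exhaust_4[of j] by (elim disjE) (simp_all add: sum_4 kd_def)
  ultimately show ?thesis unfolding Ric_def R1_eq[OF assms] Cc_def by simp
qed

lemma dP_Cc:
  assumes "p$a \<noteq> 0" "p$b \<noteq> 0"
  shows "dP m (Cc c a b) x p = Cconst c a b
    * (kd m c * (p$a * p$b) - p$c * (kd m a * p$b + p$a * kd m b)) / ((p$a * p$b) * (p$a * p$b))"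
  unfolding dP_def Cc_def
  by (rule DERIV_imp_deriv)
    (use assms in \<open>auto intro!: derivative_eq_intros simp: axis_def kd_def algebra_simps\<close>)

lemma Sv_eq:
  assumes "Pprod p > 0"
  shows "Sv i j x p = (1 - 4 * kd i j) / (8 * (p$i * p$j))"
proof -
  have nz: "\<And>k. p$k \<noteq> 0" using Pprod_component_nonzero assms by force
  then have "p$1 \<noteq> 0" "p$2 \<noteq> 0" "p$3 \<noteq> 0" "p$4 \<noteq> 0" by auto
  then show ?thesis
    unfolding Sv_def dP_Cc[OF nz nz]
    using exhaust_4[of i] exhaust_4[of j]
    by (elim disjE) (simp_all add: sum_4 kd_def Cconst_def Cc_def field_simps)
qed

section \<open>Contraction to the scalar curvature\<close>

lemma sum_less_pairs_half:
  fixes g :: "'a::{finite,linorder} \<Rightarrow> 'a \<Rightarrow> real"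
  assumes sym: "\<And>a b. g a b = g b a"
  shows "(\<Sum>(a,b)\<in>{(a,b). a<b}. g a b) = (\<Sum>a\<in>UNIV. \<Sum>b\<in>UNIV. if a = b then 0 else g a b) / 2"
proof -
  define L where "L = {(a::'a,b). a<b}"
  define L' where "L' = {(a::'a,b). b<a}"
  have "(\<Sum>a\<in>UNIV. \<Sum>b\<in>UNIV. if a = b then 0 else g a b)
      = (\<Sum>(a,b)\<in>UNIV. if a = b then 0 else g a b)"
    by (simp add: sum.cartesian_product)
  also have "\<dots> = (\<Sum>(a,b)\<in>L \<union> L'. if a = b then 0 else g a b)"
    by (rule sum.mono_neutral_right) (auto simp: L_def L'_def neq_iff split: if_splits)
  also have "\<dots> = (\<Sum>(a,b)\<in>L. if a = b then 0 else g a b) + (\<Sum>(a,b)\<in>L'. if a = b then 0 else g a b)"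
    by (rule sum.union_disjoint) (auto simp: L_def L'_def)
  also have "(\<Sum>(a,b)\<in>L'. if a = b then 0 else g a b) = (\<Sum>(a,b)\<in>L. if a = b then 0 else g a b)"
    by (rule sum.reindex_bij_witness[of _ prod.swap prod.swap]) (auto simp: L_def L'_def sym)
  also have "(\<Sum>(a,b)\<in>L. if a = b then 0 else g a b) = (\<Sum>(a,b)\<in>L. g a b)"
    by (rule sum.cong) (auto simp: L_def)
  finally show ?thesis by (simp add: L_def)
qed

lemma Ric_contraction_algebraic:
  fixes p :: "real^4" and D :: "4 \<Rightarrow> 4 \<Rightarrow> real"
  assumes nz: "p$1 \<noteq> 0" "p$2 \<noteq> 0" "p$3 \<noteq> 0" "p$4 \<noteq> 0"
    and sym: "\<And>a b. D a b = D b a"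
  shows "(\<Sum>i\<in>UNIV. \<Sum>j\<in>UNIV. (1 - 2 * kd i j) / (p$i * p$j) *
     (4 * kd i j * D i i - 4 * D i j + (\<Sum>r\<in>UNIV. \<Sum>m\<in>UNIV. Cconst i m r * p$i / (p$m * p$r) *
        (-4 * p$r * (D r m * kd r j - D r j * kd r m)))))
   = -4 * (\<Sum>a\<in>UNIV. \<Sum>b\<in>UNIV. (if a = b then 0 else D a b / (p$a * p$b)))"
  unfolding sum_4 kd_def Cconst_def using nz
  by (simp add: sym[of 2 1] sym[of 3 1] sym[of 4 1] sym[of 3 2] sym[of 4 2] sym[of 4 3])
    (simp add: field_simps)

lemma gUp_Ric_contraction:
  assumes "h11 t > 0" "Pprod p > 0" "\<And>a. pd a \<sigma> differentiable (at x)"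
    and sym: "\<And>a b. sig2 \<sigma> a b x = sig2 \<sigma> b a x"
  shows "(\<Sum>i\<in>UNIV. \<Sum>j\<in>UNIV. gUp \<sigma> h11 t x p $ i $ j * Ric \<sigma> i j x p)
    = -4 * exp (-2 * \<sigma> x) * sqrt (Pprod p) * Sigma11 \<sigma> x p"
proof -
  define c where "c = exp (-2 * \<sigma> x) * sqrt (Pprod p) / 2"
  define D where "D a b = sig2 \<sigma> a b x" for a b
  have nz: "p$1 \<noteq> 0" "p$2 \<noteq> 0" "p$3 \<noteq> 0" "p$4 \<noteq> 0"
    using Pprod_component_nonzero assms(2) by force+
  have "(\<Sum>i\<in>UNIV. \<Sum>j\<in>UNIV. gUp \<sigma> h11 t x p $ i $ j * Ric \<sigma> i j x p)
      = (\<Sum>i\<in>UNIV. \<Sum>j\<in>UNIV. c * ((1 - 2 * kd i j) / (p$i * p$j) *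
         (4 * kd i j * D i i - 4 * D i j + (\<Sum>r\<in>UNIV. \<Sum>m\<in>UNIV. Cconst i m r * p$i / (p$m * p$r) *
           (-4 * p$r * (D r m * kd r j - D r j * kd r m))))))"
    unfolding gUp_eq[of h11 t p, OF assms(1,2)] Ric_eq[OF assms(3)] D_def c_def
    by (intro sum.cong refl) simp
  also have "\<dots> = c * (-4 * (\<Sum>a\<in>UNIV. \<Sum>b\<in>UNIV. (if a = b then 0 else D a b / (p$a * p$b))))"
    unfolding sum_distrib_left[symmetric] using nz sym
    by (subst Ric_contraction_algebraic) (auto simp: D_def)
  also have "(\<Sum>a\<in>UNIV. \<Sum>b\<in>UNIV. (if a = b then 0 else D a b / (p$a * p$b))) = 2 * Sigma11 \<sigma> x p"
    unfolding Sigma11_def D_def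
    by (subst sum_less_pairs_half) (auto simp: sym mult.commute)
  finally show ?thesis by (simp add: c_def)
qed

lemma gDown_Sv_contraction:
  assumes "h11 t > 0" "Pprod p > 0"
  shows "(\<Sum>i\<in>UNIV. \<Sum>j\<in>UNIV. gDown \<sigma> h11 t x p $ i $ j * Sv i j x p)
    = 3 / 2 * exp (2 * \<sigma> x) / sqrt (Pprod p)"
proof -
  have nz: "p$1 \<noteq> 0" "p$2 \<noteq> 0" "p$3 \<noteq> 0" "p$4 \<noteq> 0"
    using Pprod_component_nonzero assms(2) by force+
  have "exp (2 * \<sigma> x) * exp (-2 * \<sigma> x) = 1" "sqrt (Pprod p) > 0"
    using assms(2) by (simp_all flip: exp_add)
  then show ?thesis
    unfolding gDown_eq[of h11 t p, OF assms] Sv_eq[OF assms(2)] sum_4 kd_def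
    using nz by (simp add: field_simps)
qed

theorem mainTheorem4:
  fixes \<sigma> :: "real^4 \<Rightarrow> real" and h11 :: "real \<Rightarrow> real" and U :: "(real^4) set"
    and t :: real and x p :: "real^4"
  assumes "open U" and "smooth_on U \<sigma>"
    and "\<exists>a\<in>U. \<exists>b\<in>U. \<sigma> a \<noteq> \<sigma> b"
    and "\<forall>s. h11 s > 0"
    and "x \<in> U" and "Pprod p > 0"
  shows "ScCG \<sigma> h11 t x p =
     - 4 * exp (-2 * \<sigma> x) * sqrt (Pprod p) * Sigma11 \<sigma> x p
     - 3 / 2 * (1 / h11 t) * exp (2 * \<sigma> x) / sqrt (Pprod p)"
proof -
  have "h11 t > 0" using assms(4) by blast
  moreover have "\<And>a. pd a \<sigma> differentiable (at x)"
    using smooth_on_differentiable(2)[OF assms(1,2,5)] .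
  moreover have "\<And>a b. sig2 \<sigma> a b x = sig2 \<sigma> b a x"
    using smooth_on_sig2_commute[OF assms(1,2,5)] .
  ultimately show ?thesis
    unfolding ScCG_def using assms(6) by (simp add: gUp_Ric_contraction gDown_Sv_contraction)
qed

end
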